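(* Let $d\ge1$, let $|\cdot|$ be any norm on $\mathbb{R}^d$, let $0<p<q<+\infty$ and let $X$ be an $\mathbb{R}^d$-valued random vector with $\mathbb{E}|X|^p<+\infty$ and distribution $\mu$. Let $(a_N)_{N\ge1}$ be an $L^p$-optimal greedy quantization sequence for $X$, and assume that for some $b\in(0,\frac12)$ the $b$-maximal function $\Psi_b$ associated with $(a_N)_{N\ge1}$ satisfies $\int_{\mathbb{R}^d}\Psi_b^{\frac{q}{p+d}}d\mu<+\infty$. Then $\mathbb{E}|X|^q<+\infty$ and $$\limsup_{N\to+\infty}N^{\frac1d}\,e_q(a^{(N)},X)<+\infty.$$
   Context: For $\Gamma\subset\mathbb{R}^d$ and $r>0$ put $e_r(\Gamma,X)=\big(\mathbb{E}\,d(X,\Gamma)^r\big)^{1/r}$ with $d(\xi,\Gamma)=\inf_{a\in\Gamma}|\xi-a|$ ($d(\xi,\emptyset)=+\infty$). A sequence $(a_N)_{N\ge1}$ in $\mathbb{R}^d$ is an $L^p$-optimal greedy quantization sequence if, writing $a^{(N)}=\{a_1,\dots,a_N\}$ and $a^{(0)}=\emptyset$, one has $a_{N+1}\in\operatorname{argmin}_{\xi\in\mathbb{R}^d}e_p(a^{(N)}\cup\{\xi\},X)$ for every $N\ge0$. For $b\in(0,\frac12)$, the $b$-maximal function associated with $(a_N)$ is $$\Psi_b(\xi)=\sup_{N\ge1}\frac{\lambda_d\big(B(\xi,b\,d(\xi,a^{(N)}))\big)}{\mu\big(B(\xi,b\,d(\xi,a^{(N)}))\big)}\in[0,+\infty],\quad\xi\in\mathbb{R}^d,$$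 where $\lambda_d$ is Lebesgue measure, $B(x,\rho)$ is the closed ball for $|\cdot|$, with the convention $\frac10=+\infty$. *)

theory Defs
  imports "HOL-Analysis.Analysis" "HOL-Probability.Probability"
begin

text \<open>A norm on a real vector space (the norm in the paper is arbitrary, not
  necessarily the Euclidean one).\<close>
definition is_norm :: "('a::real_vector \<Rightarrow> real) \<Rightarrow> bool" where
  "is_norm nrm \<longleftrightarrow> (\<forall>x. 0 \<le> nrm x) \<and> (\<forall>x. nrm x = 0 \<longleftrightarrow> x = 0)
     \<and> (\<forall>c x. nrm (c *\<^sub>R x) = \<bar>c\<bar> * nrm x) \<and> (\<forall>x y. nrm (x + y) \<le> nrm x + nrm y)"

definition nball :: "('a::real_vector \<Rightarrow> real) \<Rightarrow> 'a \<Rightarrow> real \<Rightarrow> 'a set" where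
  "nball nrm x \<rho> = {y. nrm (y - x) \<le> \<rho>}"

definition dist_set :: "('a::real_vector \<Rightarrow> real) \<Rightarrow> 'a \<Rightarrow> 'a set \<Rightarrow> ennreal" where
  "dist_set nrm \<xi> \<Gamma> = (if \<Gamma> = {} then \<infinity> else ennreal (Inf ((\<lambda>a. nrm (\<xi> - a)) ` \<Gamma>)))"

definition enn_powr :: "ennreal \<Rightarrow> real \<Rightarrow> ennreal" where
  "enn_powr x r = (if x = \<infinity> then \<infinity> else ennreal (enn2real x powr r))"

definition quant_err ::
  "('a::real_vector \<Rightarrow> real) \<Rightarrow> 'b measure \<Rightarrow> ('b \<Rightarrow> 'a) \<Rightarrow> real \<Rightarrow> 'a set \<Rightarrow> ennreal" where
  "quant_err nrm M X r \<Gamma> = enn_powr (\<integral>\<^sup>+ \<omega>. enn_powr (dist_set nrm (X \<omega>) \<Gamma>) r \<partial>M) (1 / r)"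

definition first_pts :: "(nat \<Rightarrow> 'a) \<Rightarrow> nat \<Rightarrow> 'a set" where
  "first_pts a n = a ` {1..n}"

definition greedy_seq ::
  "('a::real_vector \<Rightarrow> real) \<Rightarrow> 'b measure \<Rightarrow> ('b \<Rightarrow> 'a) \<Rightarrow> real \<Rightarrow> (nat \<Rightarrow> 'a) \<Rightarrow> bool" where
  "greedy_seq nrm M X p a \<longleftrightarrow>
     (\<forall>n. \<forall>\<xi>. quant_err nrm M X p (first_pts a n \<union> {a (Suc n)})
              \<le> quant_err nrm M X p (first_pts a n \<union> {\<xi>}))"

text \<open>The b-maximal function Psi_b associated with (a_N) (mu the distribution of X,
  lborel the Lebesgue measure). Division in ennreal gives c/0 = infinity for c > 0.\<close>
definition max_fun ::
  "('a::euclidean_space \<Rightarrow> real) \<Rightarrow> 'a measure \<Rightarrow> (nat \<Rightarrow> 'a) \<Rightarrow> real \<Rightarrow> 'a \<Rightarrow> ennreal" where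
  "max_fun nrm \<mu> a b \<xi> =
     (SUP n\<in>{1..}. emeasure lborel (nball nrm \<xi> (b * enn2real (dist_set nrm \<xi> (first_pts a n))))
                  / emeasure \<mu> (nball nrm \<xi> (b * enn2real (dist_set nrm \<xi> (first_pts a n)))))"

end

theory Submission
  imports Defs
begin

text \<open>Write \<open>D\<^sub>n(\<xi>)\<close> for the distance from \<open>\<xi>\<close> to \<open>a\<^sup>(\<^sup>n\<^sup>)\<close> and \<open>U\<^sub>n = E D\<^sub>n(X)\<^sup>p\<close>.
  Since \<open>a\<^sub>n\<^sub>+\<^sub>1\<close> is at least as good as any competitor \<open>\<xi>\<close>, and moving to \<open>\<xi>\<close> gains at least
  \<open>c D\<^sub>n(\<xi>)\<^sup>p\<close> with \<open>c = (1 - b)\<^sup>p - b\<^sup>p > 0\<close> on the ball \<open>B = B(\<xi>, b D\<^sub>n(\<xi>))\<close>, we get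
  \<open>U\<^sub>n - U\<^sub>n\<^sub>+\<^sub>1 \<ge> c D\<^sub>n(\<xi>)\<^sup>p \<mu>(B)\<close>. The maximal function gives \<open>\<mu>(B) \<ge> \<lambda>(B) / \<Psi>\<^sub>b(\<xi>)\<close>
  with \<open>\<lambda>(B) \<ge> c' D\<^sub>n(\<xi>)\<^sup>d\<close>, and telescoping from \<open>n\<close> to \<open>2n\<close> yields
  \<open>n D\<^sub>2\<^sub>n(\<xi>)\<^sup>p\<^sup>+\<^sup>d \<le> C \<Psi>\<^sub>b(\<xi>) U\<^sub>n\<close>. Raising this to the power \<open>r / (p + d)\<close> and integrating gives
  \<open>E D\<^sub>2\<^sub>n(X)\<^sup>r \<le> C (U\<^sub>n / n)\<^sup>r\<^sup>/\<^sup>(\<^sup>p\<^sup>+\<^sup>d\<^sup>) E \<Psi>\<^sub>b(X)\<^sup>r\<^sup>/\<^sup>(\<^sup>p\<^sup>+\<^sup>d\<^sup>)\<close>. For \<open>r = p\<close> this is a recursion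
  forcing \<open>U\<^sub>n = O(n\<^sup>-\<^sup>p\<^sup>/\<^sup>d)\<close>; fed back with \<open>r = q\<close> it gives \<open>E D\<^sub>n(X)\<^sup>q = O(n\<^sup>-\<^sup>q\<^sup>/\<^sup>d)\<close>.\<close>

lemma is_norm_nonneg: "is_norm nrm \<Longrightarrow> 0 \<le> nrm x"
  unfolding is_norm_def by blast

lemma is_norm_scaleR: "is_norm nrm \<Longrightarrow> nrm (c *\<^sub>R x) = \<bar>c\<bar> * nrm x"
  unfolding is_norm_def by blast

lemma is_norm_triangle: "is_norm nrm \<Longrightarrow> nrm (x + y) \<le> nrm x + nrm y"
  unfolding is_norm_def by blast

lemma is_norm_minus: "is_norm nrm \<Longrightarrow> nrm (- x) = nrm x"
  using is_norm_scaleR[of nrm "-1" x] by simp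

lemma is_norm_minus_commute: "is_norm nrm \<Longrightarrow> nrm (x - y) = nrm (y - x)"
  using is_norm_minus[of nrm "x - y"] by simp

lemma is_norm_triangle_diff: "is_norm nrm \<Longrightarrow> nrm (x - z) \<le> nrm (x - y) + nrm (y - z)"
  using is_norm_triangle[of nrm "x - y" "y - z"] by simp

lemma is_norm_sum:
  assumes "is_norm nrm"
  shows "nrm (sum f S) \<le> (\<Sum>i\<in>S. nrm (f i))"
proof (induction S rule: infinite_finite_induct)
  case (insert x F)
  then show ?case using is_norm_triangle[OF assms, of "f x" "sum f F"] by simp
qed (use is_norm_scaleR[OF assms, of 0 0] in simp_all)

definition norm_const :: "('a::euclidean_space \<Rightarrow> real) \<Rightarrow> real" where
  "norm_const nrm = 1 + (\<Sum>i\<in>Basis. nrm i)"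

lemma norm_const_pos: "is_norm nrm \<Longrightarrow> 0 < norm_const nrm"
  unfolding norm_const_def using sum_nonneg[of Basis nrm] is_norm_nonneg[of nrm]
  by (smt (verit))

lemma is_norm_le_norm_const:
  fixes nrm :: "'a::euclidean_space \<Rightarrow> real"
  assumes "is_norm nrm"
  shows "nrm x \<le> norm_const nrm * norm x"
proof -
  have "nrm x = nrm (\<Sum>i\<in>Basis. (x \<bullet> i) *\<^sub>R i)" by (simp add: euclidean_representation)
  also have "\<dots> \<le> (\<Sum>i\<in>Basis. nrm ((x \<bullet> i) *\<^sub>R i))" by (rule is_norm_sum[OF assms])
  also have "\<dots> = (\<Sum>i\<in>Basis. \<bar>x \<bullet> i\<bar> * nrm i)" by (simp add: is_norm_scaleR[OF assms])
  also have "\<dots> \<le> (\<Sum>i\<in>Basis. norm x * nrm i)"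
    by (intro sum_mono mult_right_mono) (auto simp: Basis_le_norm is_norm_nonneg[OF assms])
  also have "\<dots> \<le> norm_const nrm * norm x"
    using norm_ge_zero[of x] by (simp add: norm_const_def sum_distrib_left[symmetric] algebra_simps)
  finally show ?thesis .
qed

lemma continuous_on_nrm_lipschitz:
  fixes nrm :: "'a::euclidean_space \<Rightarrow> real"
  assumes "is_norm nrm" and lip: "\<And>x y. f x \<le> f y + nrm (x - y)"
  shows "continuous_on UNIV f"
proof -
  let ?C = "norm_const nrm"
  have "\<bar>f x - f y\<bar> \<le> ?C * dist x y" for x y
    using lip[of x y] lip[of y x] is_norm_le_norm_const[OF assms(1), of "x - y"]
      is_norm_le_norm_const[OF assms(1), of "y - x"]
    by (simp add: dist_norm norm_minus_commute)
  then have "?C-lipschitz_on UNIV f"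
    using norm_const_pos[OF assms(1)] by (intro lipschitz_onI) (auto simp: dist_real_def)
  then show ?thesis by (rule lipschitz_on_continuous_on)
qed

lemma continuous_on_is_norm:
  fixes nrm :: "'a::euclidean_space \<Rightarrow> real"
  assumes "is_norm nrm"
  shows "continuous_on UNIV nrm"
  using assms by (rule continuous_on_nrm_lipschitz)
    (metis add.commute diff_add_cancel is_norm_triangle[OF assms])

lemma borel_measurable_is_norm [measurable]:
  fixes nrm :: "'a::euclidean_space \<Rightarrow> real"
  shows "is_norm nrm \<Longrightarrow> nrm \<in> borel_measurable borel"
  by (rule borel_measurable_continuous_onI[OF continuous_on_is_norm])

lemma nball_in_borel [measurable]:
  fixes nrm :: "'a::euclidean_space \<Rightarrow> real"
  shows "is_norm nrm \<Longrightarrow> nball nrm \<xi> \<rho> \<in> sets borel"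
  unfolding nball_def by measurable

lemma emeasure_nball_ge:
  fixes nrm :: "'a::euclidean_space \<Rightarrow> real"
  assumes "is_norm nrm" "0 \<le> \<rho>"
  shows "ennreal (unit_ball_vol DIM('a) * (\<rho> / norm_const nrm) ^ DIM('a))
           \<le> emeasure lborel (nball nrm \<xi> \<rho>)"
proof -
  have C: "0 < norm_const nrm" by (rule norm_const_pos[OF assms(1)])
  have "cball \<xi> (\<rho> / norm_const nrm) \<subseteq> nball nrm \<xi> \<rho>"
  proof
    fix y assume "y \<in> cball \<xi> (\<rho> / norm_const nrm)"
    then have "norm_const nrm * norm (y - \<xi>) \<le> \<rho>"
      using C by (simp add: dist_norm norm_minus_commute field_simps)
    then show "y \<in> nball nrm \<xi> \<rho>"
      using is_norm_le_norm_const[OF assms(1), of "y - \<xi>"] unfolding nball_def by simp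
  qed
  then have "emeasure lborel (cball \<xi> (\<rho> / norm_const nrm)) \<le> emeasure lborel (nball nrm \<xi> \<rho>)"
    using assms(1) by (intro emeasure_mono) simp_all
  then show ?thesis
    using assms(2) C by (simp add: emeasure_cball)
qed

lemma borel_measurable_emeasure_nball:
  fixes nrm :: "'a::euclidean_space \<Rightarrow> real" and \<nu> :: "'a measure"
  assumes "sigma_finite_measure \<nu>" "sets \<nu> = sets borel" "is_norm nrm" "continuous_on UNIV r"
  shows "(\<lambda>\<xi>. emeasure \<nu> (nball nrm \<xi> (r \<xi>))) \<in> borel_measurable borel"
proof -
  define Q where "Q = {z :: 'a \<times> 'a. nrm (snd z - fst z) \<le> r (fst z)}"
  have "continuous_on UNIV (\<lambda>z :: 'a \<times> 'a. nrm (snd z - fst z))"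
    by (rule continuous_on_compose2[OF continuous_on_is_norm[OF assms(3)]])
      (auto intro!: continuous_intros)
  moreover have "continuous_on UNIV (\<lambda>z :: 'a \<times> 'a. r (fst z))"
    by (rule continuous_on_compose2[OF assms(4)]) (auto intro!: continuous_intros)
  ultimately have "Q \<in> sets borel" unfolding Q_def by (intro borel_closed closed_Collect_le)
  moreover have "sets (borel \<Otimes>\<^sub>M \<nu>) = sets (borel :: ('a \<times> 'a) measure)"
    using sets_pair_measure_cong[OF refl assms(2)] borel_prod by metis
  ultimately have "(\<lambda>\<xi>. emeasure \<nu> (Pair \<xi> -` Q)) \<in> borel_measurable borel"
    by (intro sigma_finite_measure.measurable_emeasure_Pair[OF assms(1)]) simp
  moreover have "Pair \<xi> -` Q = nball nrm \<xi> (r \<xi>)" for \<xi>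
    unfolding Q_def nball_def by auto
  ultimately show ?thesis by simp
qed

definition dist_pts :: "('a::real_vector \<Rightarrow> real) \<Rightarrow> (nat \<Rightarrow> 'a) \<Rightarrow> nat \<Rightarrow> 'a \<Rightarrow> real" where
  "dist_pts nrm a n x = Min ((\<lambda>i. nrm (x - a i)) ` {1..n})"

lemma dist_pts_le: "i \<in> {1..n} \<Longrightarrow> dist_pts nrm a n x \<le> nrm (x - a i)"
  unfolding dist_pts_def by (rule Min_le) auto

lemma dist_pts_attained: "1 \<le> n \<Longrightarrow> \<exists>i\<in>{1..n}. dist_pts nrm a n x = nrm (x - a i)"
proof -
  assume "1 \<le> n"
  then have "dist_pts nrm a n x \<in> (\<lambda>i. nrm (x - a i)) ` {1..n}"
    unfolding dist_pts_def by (intro Min_in) auto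
  then show ?thesis by blast
qed

lemma dist_pts_nonneg: "is_norm nrm \<Longrightarrow> 1 \<le> n \<Longrightarrow> 0 \<le> dist_pts nrm a n x"
  using dist_pts_attained[of n nrm a x] is_norm_nonneg[of nrm] by metis

lemma dist_pts_antimono: "1 \<le> n \<Longrightarrow> n \<le> m \<Longrightarrow> dist_pts nrm a m x \<le> dist_pts nrm a n x"
  using dist_pts_attained[of n nrm a x] dist_pts_le[of _ m nrm a x] by force

lemma dist_pts_triangle:
  assumes "is_norm nrm" "1 \<le> n"
  shows "dist_pts nrm a n x \<le> dist_pts nrm a n y + nrm (x - y)"
proof -
  obtain i where i: "i \<in> {1..n}" "dist_pts nrm a n y = nrm (y - a i)"
    using dist_pts_attained[OF assms(2)] by blast
  have "dist_pts nrm a n x \<le> nrm (x - a i)" by (rule dist_pts_le[OF i(1)])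
  also have "\<dots> \<le> nrm (x - y) + nrm (y - a i)" by (rule is_norm_triangle_diff[OF assms(1)])
  finally show ?thesis using i by simp
qed

lemma continuous_on_dist_pts:
  fixes nrm :: "'a::euclidean_space \<Rightarrow> real"
  assumes "is_norm nrm"
  shows "continuous_on UNIV (dist_pts nrm a n)"
proof (cases "1 \<le> n")
  case True
  then show ?thesis
    by (intro continuous_on_nrm_lipschitz[OF assms] dist_pts_triangle[OF assms])
qed (simp add: dist_pts_def)

lemma borel_measurable_dist_pts [measurable]:
  fixes nrm :: "'a::euclidean_space \<Rightarrow> real"
  shows "is_norm nrm \<Longrightarrow> dist_pts nrm a n \<in> borel_measurable borel"
  by (rule borel_measurable_continuous_onI[OF continuous_on_dist_pts])

lemma first_pts_Suc: "first_pts a n \<union> {a (Suc n)} = first_pts a (Suc n)"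
  unfolding first_pts_def by (auto simp: atLeastAtMostSuc_conv)

lemma dist_set_first_pts:
  "1 \<le> n \<Longrightarrow> dist_set nrm x (first_pts a n) = ennreal (dist_pts nrm a n x)"
  unfolding dist_set_def first_pts_def dist_pts_def by (auto simp: image_image cInf_eq_Min)

lemma dist_set_first_pts_insert:
  assumes "1 \<le> n"
  shows "dist_set nrm x (first_pts a n \<union> {\<xi>}) = ennreal (min (dist_pts nrm a n x) (nrm (x - \<xi>)))"
proof -
  have "(\<lambda>y. nrm (x - y)) ` (first_pts a n \<union> {\<xi>})
      = insert (nrm (x - \<xi>)) ((\<lambda>i. nrm (x - a i)) ` {1..n})"
    unfolding first_pts_def by auto
  then show ?thesis
    using assms unfolding dist_set_def dist_pts_def
    by (simp add: cInf_eq_Min Min_insert min.commute)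
qed

lemma max_fun_dist_pts:
  assumes "is_norm nrm"
  shows "max_fun nrm \<mu> a b \<xi> =
    (SUP n\<in>{1..}. emeasure lborel (nball nrm \<xi> (b * dist_pts nrm a n \<xi>))
                  / emeasure \<mu> (nball nrm \<xi> (b * dist_pts nrm a n \<xi>)))"
  unfolding max_fun_def
  by (intro SUP_cong refl) (simp add: dist_set_first_pts dist_pts_nonneg[OF assms])

lemma borel_measurable_max_fun:
  fixes nrm :: "'a::euclidean_space \<Rightarrow> real" and \<mu> :: "'a measure"
  assumes "is_norm nrm" "finite_measure \<mu>" "sets \<mu> = sets borel"
  shows "max_fun nrm \<mu> a b \<in> borel_measurable borel"
proof -
  have r: "continuous_on UNIV (\<lambda>\<xi>. b * dist_pts nrm a n \<xi>)" for n
    using continuous_on_dist_pts[OF assms(1)] by (auto intro!: continuous_intros)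
  have "sigma_finite_measure \<mu>" using assms(2) by (rule finite_measure.axioms(1))
  then show ?thesis
    unfolding max_fun_dist_pts[OF assms(1), abs_def]
    by (intro borel_measurable_SUP borel_measurable_divide_ennreal
        borel_measurable_emeasure_nball[OF _ _ assms(1) r] lborel.sigma_finite_measure_axioms assms(3))
      simp_all
qed

lemma enn_powr_ennreal: "0 \<le> t \<Longrightarrow> enn_powr (ennreal t) r = ennreal (t powr r)"
  unfolding enn_powr_def by simp

lemma enn_powr_le_cancel:
  assumes "enn_powr x r \<le> enn_powr y r" "0 < r"
  shows "x \<le> y"
proof (cases "y = \<infinity>")
  case False
  then have "x \<noteq> \<infinity>" using assms(1) unfolding enn_powr_def by (auto split: if_splits simp: top_unique)
  then obtain s t where "x = ennreal s" "y = ennreal t" "0 \<le> s" "0 \<le> t"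
    using False by (metis ennreal_cases infinity_ennreal_def)
  with assms show ?thesis
    by (simp add: enn_powr_ennreal) (metis not_le powr_less_mono2)
qed simp

lemma borel_measurable_enn_powr [measurable]:
  assumes [measurable]: "f \<in> borel_measurable N"
  shows "(\<lambda>x. enn_powr (f x) r) \<in> borel_measurable N"
proof -
  have "{x \<in> space N. f x = \<infinity>} \<in> sets N" by measurable
  then show ?thesis unfolding enn_powr_def by (intro measurable_If) simp_all
qed

lemma enn_powr_le_one_plus:
  assumes "0 < \<alpha>" "\<alpha> \<le> \<beta>"
  shows "enn_powr x \<alpha> \<le> 1 + enn_powr x \<beta>"
proof (cases "x = \<infinity>")
  case False
  then obtain t where t: "x = ennreal t" "0 \<le> t" by (metis ennreal_cases infinity_ennreal_def)
  have "t powr \<alpha> \<le> 1 + t powr \<beta>"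
  proof (cases "t \<le> 1")
    case True
    then show ?thesis using t assms powr_le1[of \<alpha> t] by (smt (verit) powr_ge_zero)
  next
    case False
    then have "t powr \<alpha> \<le> t powr \<beta>" using assms by (intro powr_mono) auto
    then show ?thesis by simp
  qed
  then have "ennreal (t powr \<alpha>) \<le> ennreal (1 + t powr \<beta>)" by (rule ennreal_leI)
  then show ?thesis using t by (simp add: enn_powr_ennreal)
qed (simp add: enn_powr_def)

lemma powr_add_le:
  fixes s t r :: real
  assumes "0 \<le> s" "0 \<le> t" "0 < r"
  shows "(s + t) powr r \<le> 2 powr r * (s powr r + t powr r)"
proof -
  have "(s + t) powr r \<le> (2 * max s t) powr r" using assms by (intro powr_mono2) auto
  also have "\<dots> = 2 powr r * max s t powr r" by (simp add: powr_mult)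
  also have "\<dots> \<le> 2 powr r * (s powr r + t powr r)" by (simp add: max_def)
  finally show ?thesis .
qed

lemma (in prob_space) nn_integral_powr_finite_shift:
  assumes g [measurable]: "g \<in> borel_measurable M"
    and f: "\<And>x. 0 \<le> f x" "\<And>x. f x \<le> g x + c" and g0: "\<And>x. 0 \<le> g x"
    and "0 \<le> c" "0 < r" and fin: "(\<integral>\<^sup>+x. ennreal (g x powr r) \<partial>M) < \<infinity>"
  shows "(\<integral>\<^sup>+x. ennreal (f x powr r) \<partial>M) < \<infinity>"
proof -
  have "ennreal (f x powr r) \<le> ennreal (2 powr r) * (ennreal (g x powr r) + ennreal (c powr r))" for x
  proof -
    have "f x powr r \<le> (g x + c) powr r" using assms f g0 by (intro powr_mono2) auto
    also have "\<dots> \<le> 2 powr r * (g x powr r + c powr r)" using assms g0 by (intro powr_add_le)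
    finally have "ennreal (f x powr r) \<le> ennreal (2 powr r * (g x powr r + c powr r))"
      by (rule ennreal_leI)
    then show ?thesis by (simp add: ennreal_mult)
  qed
  then have "(\<integral>\<^sup>+x. ennreal (f x powr r) \<partial>M)
      \<le> (\<integral>\<^sup>+x. ennreal (2 powr r) * (ennreal (g x powr r) + ennreal (c powr r)) \<partial>M)"
    by (intro nn_integral_mono)
  also have "\<dots> = ennreal (2 powr r) * ((\<integral>\<^sup>+x. ennreal (g x powr r) \<partial>M) + ennreal (c powr r))"
    by (simp add: nn_integral_cmult nn_integral_add emeasure_space_1)
  also have "\<dots> < \<infinity>" using fin by (simp add: ennreal_mult_less_top)
  finally show ?thesis .
qed

lemma powr_half_le:
  assumes "2 \<le> (n::nat)" "0 \<le> s"
  shows "real (n div 2) powr (- s) \<le> 3 powr s * real n powr (- s)"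
proof -
  have "n \<le> 3 * (n div 2)" using assms(1) mod_less_eq_dividend[of n 2] div_mult_mod_eq[of n 2]
    by linarith
  then have "real n / 3 \<le> real (n div 2)" by linarith
  then have "real (n div 2) powr (- s) \<le> (real n / 3) powr (- s)"
    using assms by (intro powr_mono2') auto
  also have "(real n / 3) powr (- s) = real n powr (- s) / 3 powr (- s)" by (rule powr_divide)
  also have "\<dots> = 3 powr s * real n powr (- s)" by (simp add: powr_minus divide_inverse)
  finally show ?thesis .
qed

text \<open>With \<open>\<gamma> = \<alpha> / (1 - \<alpha>)\<close>, the bound \<open>U n \<le> C n\<^sup>-\<^sup>\<gamma>\<close> is reproduced by the recursion
  because \<open>(\<gamma> + 1) \<alpha> = \<gamma>\<close> and \<open>C\<^sup>\<alpha> \<le> C / (3\<^sup>\<gamma> K)\<close> once \<open>C\<close> is large.\<close>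
lemma halving_recursion_decay:
  fixes U :: "nat \<Rightarrow> real" and \<alpha> K :: real
  assumes \<alpha>: "0 < \<alpha>" "\<alpha> < 1" and K: "0 \<le> K"
    and nonneg: "\<And>n. 0 \<le> U n" and antimono: "\<And>m n. 1 \<le> m \<Longrightarrow> m \<le> n \<Longrightarrow> U n \<le> U m"
    and rec: "\<And>m. 1 \<le> m \<Longrightarrow> U (2 * m) \<le> K * (U m / m) powr \<alpha>"
  shows "\<exists>C>0. \<forall>n\<ge>1. U n \<le> C * real n powr (- (\<alpha> / (1 - \<alpha>)))"
proof -
  define \<gamma> where "\<gamma> = \<alpha> / (1 - \<alpha>)"
  define A where "A = K * 3 powr \<gamma>"
  define C where "C = max (U 1) (max 1 (A powr (1 / (1 - \<alpha>))))"
  have \<gamma>: "0 < \<gamma>" "(- \<gamma> - 1) * \<alpha> = - \<gamma>" using \<alpha> by (auto simp: \<gamma>_def field_simps)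
  have C1: "1 \<le> C" unfolding C_def by simp
  have "(A powr (1 / (1 - \<alpha>))) powr (1 - \<alpha>) \<le> C powr (1 - \<alpha>)"
    using \<alpha> by (intro powr_mono2) (auto simp: C_def)
  then have A: "A \<le> C powr (1 - \<alpha>)" using \<alpha> K by (simp add: A_def powr_powr)
  have "1 \<le> n \<longrightarrow> U n \<le> C * real n powr (- \<gamma>)" for n
  proof (induction n rule: less_induct)
    case (less n)
    show ?case
    proof (cases "n \<le> 1")
      case True then show ?thesis unfolding C_def by (auto simp: le_Suc_eq)
    next
      case False
      define m where "m = n div 2"
      have m: "1 \<le> m" "m < n" "2 * m \<le> n" unfolding m_def using False by auto
      have "U n \<le> U (2 * m)" using antimono[of "2 * m" n] m by simp
      also have "\<dots> \<le> K * (U m / m) powr \<alpha>" by (rule rec[OF m(1)])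
      also have "\<dots> \<le> K * (C * real m powr (- \<gamma>) / m) powr \<alpha>"
        using less.IH[of m] m nonneg[of m] \<alpha> K
        by (intro mult_left_mono powr_mono2 divide_right_mono) auto
      also have "\<dots> = K * C powr \<alpha> * real m powr (- \<gamma>)"
      proof -
        have "C * real m powr (- \<gamma>) / m = C * real m powr (- \<gamma> - 1)"
          using m(1) by (simp add: powr_diff)
        then show ?thesis using \<gamma>(2) by (simp add: powr_mult powr_powr)
      qed
      also have "\<dots> \<le> K * C powr \<alpha> * (3 powr \<gamma> * real n powr (- \<gamma>))"
        using powr_half_le[of n \<gamma>] False \<gamma> K unfolding m_def by (intro mult_left_mono) auto
      also have "\<dots> = C powr \<alpha> * A * real n powr (- \<gamma>)" unfolding A_def by simp
      also have "\<dots> \<le> C powr \<alpha> * C powr (1 - \<alpha>) * real n powr (- \<gamma>)"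
        using A by (intro mult_right_mono mult_left_mono) auto
      also have "\<dots> = C * real n powr (- \<gamma>)" using C1 by (simp add: powr_add[symmetric])
      finally show ?thesis by blast
    qed
  qed
  then show ?thesis using C1 unfolding \<gamma>_def by (intro exI[of _ C]) auto
qed

lemma powr_min_dist_pts_gain:
  assumes "is_norm nrm" "1 \<le> n" "0 \<le> b" "b \<le> 1" "0 < p"
    and x: "nrm (x - \<xi>) \<le> b * dist_pts nrm a n \<xi>"
  shows "min (dist_pts nrm a n x) (nrm (x - \<xi>)) powr p
           + ((1 - b) powr p - b powr p) * dist_pts nrm a n \<xi> powr p
         \<le> dist_pts nrm a n x powr p"
proof -
  define D where "D = dist_pts nrm a n \<xi>"
  have D0: "0 \<le> D" unfolding D_def by (rule dist_pts_nonneg[OF assms(1,2)])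
  have "D \<le> dist_pts nrm a n x + nrm (\<xi> - x)" unfolding D_def by (rule dist_pts_triangle[OF assms(1,2)])
  then have "(1 - b) * D \<le> dist_pts nrm a n x"
    using x is_norm_minus_commute[OF assms(1), of x \<xi>] by (simp add: D_def algebra_simps)
  then have "(1 - b) powr p * D powr p \<le> dist_pts nrm a n x powr p"
    using assms D0 by (subst powr_mult[symmetric]) (auto intro: powr_mono2)
  moreover have "min (dist_pts nrm a n x) (nrm (x - \<xi>)) powr p \<le> (b * D) powr p"
    using assms x by (intro powr_mono2) (auto simp: D_def dist_pts_nonneg is_norm_nonneg)
  moreover have "(b * D) powr p = b powr p * D powr p" using assms D0 by (simp add: powr_mult)
  ultimately show ?thesis by (simp add: D_def algebra_simps)
qed

locale greedy_quantization = prob_space M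
  for M :: "'b measure" +
  fixes nrm :: "'a::euclidean_space \<Rightarrow> real" and X :: "'b \<Rightarrow> 'a"
    and p b :: real and a :: "nat \<Rightarrow> 'a"
  assumes nrm: "is_norm nrm" and X [measurable]: "X \<in> borel_measurable M"
    and p: "0 < p" and moment_p: "(\<integral>\<^sup>+\<omega>. ennreal (nrm (X \<omega>) powr p) \<partial>M) < \<infinity>"
    and greedy: "greedy_seq nrm M X p a" and b: "0 < b" "b < 1/2"
begin

lemmas [measurable] = borel_measurable_is_norm[OF nrm] borel_measurable_dist_pts[OF nrm]
  nball_in_borel[OF nrm]

definition "mu = distr M borel X"

definition "Psi = max_fun nrm mu a b"

definition "moment n = enn2real (\<integral>\<^sup>+\<omega>. ennreal (dist_pts nrm a n (X \<omega>) powr p) \<partial>M)"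

definition "gain = (1 - b) powr p - b powr p"

definition "kappa = gain * unit_ball_vol DIM('a) * (b / norm_const nrm) ^ DIM('a)"

lemma prob_space_mu: "prob_space mu"
  unfolding mu_def by (rule prob_space_distr) simp

lemma sets_mu [simp, measurable_cong]: "sets mu = sets borel"
  unfolding mu_def by simp

lemma emeasure_mu_eq_measure: "emeasure mu A = ennreal (measure mu A)"
  using prob_space_mu by (intro finite_measure.emeasure_eq_measure prob_space.axioms(1))

lemma gain_pos: "0 < gain"
  unfolding gain_def using b p by (simp add: powr_less_mono2)

lemma kappa_pos: "0 < kappa"
  unfolding kappa_def using gain_pos b norm_const_pos[OF nrm] by simp

lemma nn_integral_dist_pts_finite:
  assumes "1 \<le> n"
  shows "(\<integral>\<^sup>+\<omega>. ennreal (dist_pts nrm a n (X \<omega>) powr p) \<partial>M) < \<infinity>"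
proof -
  have "dist_pts nrm a 1 x \<le> nrm x + nrm (a 1)" for x
  proof -
    have "dist_pts nrm a 1 x \<le> nrm (x - a 1)" by (rule dist_pts_le) simp
    also have "\<dots> \<le> nrm x + nrm (a 1)"
      using is_norm_triangle[OF nrm, of x "- a 1"] is_norm_minus[OF nrm, of "a 1"] by simp
    finally show ?thesis .
  qed
  then have "(\<integral>\<^sup>+\<omega>. ennreal (dist_pts nrm a 1 (X \<omega>) powr p) \<partial>M) < \<infinity>"
    by (intro nn_integral_powr_finite_shift[OF _ _ _ _ _ p moment_p])
      (use is_norm_nonneg[OF nrm] dist_pts_nonneg[OF nrm] in auto)
  moreover have "(\<integral>\<^sup>+\<omega>. ennreal (dist_pts nrm a n (X \<omega>) powr p) \<partial>M)
      \<le> (\<integral>\<^sup>+\<omega>. ennreal (dist_pts nrm a 1 (X \<omega>) powr p) \<partial>M)"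
    using assms p by (intro nn_integral_mono ennreal_leI powr_mono2)
      (auto simp: dist_pts_nonneg[OF nrm] dist_pts_antimono)
  ultimately show ?thesis by simp
qed

lemma nn_integral_dist_pts_eq:
  "1 \<le> n \<Longrightarrow> (\<integral>\<^sup>+\<omega>. ennreal (dist_pts nrm a n (X \<omega>) powr p) \<partial>M) = ennreal (moment n)"
  unfolding moment_def using nn_integral_dist_pts_finite by (simp add: less_top)

lemma moment_nonneg: "0 \<le> moment n"
  unfolding moment_def by simp

lemma moment_antimono:
  assumes "1 \<le> n" "n \<le> m"
  shows "moment m \<le> moment n"
proof -
  have "ennreal (moment m) = (\<integral>\<^sup>+\<omega>. ennreal (dist_pts nrm a m (X \<omega>) powr p) \<partial>M)"
    using assms by (intro nn_integral_dist_pts_eq[symmetric]) simp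
  also have "\<dots> \<le> (\<integral>\<^sup>+\<omega>. ennreal (dist_pts nrm a n (X \<omega>) powr p) \<partial>M)"
    using assms p by (intro nn_integral_mono ennreal_leI powr_mono2)
      (auto simp: dist_pts_nonneg[OF nrm] dist_pts_antimono)
  also have "\<dots> = ennreal (moment n)" by (rule nn_integral_dist_pts_eq[OF assms(1)])
  finally show ?thesis using moment_nonneg by simp
qed

lemma nn_integral_dist_set_first_pts:
  "1 \<le> n \<Longrightarrow> (\<integral>\<^sup>+\<omega>. enn_powr (dist_set nrm (X \<omega>) (first_pts a n)) r \<partial>M)
     = (\<integral>\<^sup>+\<omega>. ennreal (dist_pts nrm a n (X \<omega>) powr r) \<partial>M)"
  by (intro nn_integral_cong) (simp add: dist_set_first_pts enn_powr_ennreal dist_pts_nonneg[OF nrm])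

lemma greedy_competitor:
  assumes "1 \<le> n"
  shows "ennreal (moment (Suc n))
    \<le> (\<integral>\<^sup>+\<omega>. ennreal (min (dist_pts nrm a n (X \<omega>)) (nrm (X \<omega> - \<xi>)) powr p) \<partial>M)"
proof -
  have "quant_err nrm M X p (first_pts a (Suc n)) \<le> quant_err nrm M X p (first_pts a n \<union> {\<xi>})"
    using greedy unfolding greedy_seq_def first_pts_Suc by blast
  moreover have "enn_powr (dist_set nrm x (first_pts a n \<union> {\<xi>})) p
      = ennreal (min (dist_pts nrm a n x) (nrm (x - \<xi>)) powr p)" for x
    using assms unfolding dist_set_first_pts_insert[OF assms]
    by (simp add: enn_powr_ennreal dist_pts_nonneg[OF nrm] is_norm_nonneg[OF nrm])
  ultimately have "enn_powr (ennreal (moment (Suc n))) (1 / p)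
      \<le> enn_powr (\<integral>\<^sup>+\<omega>. ennreal (min (dist_pts nrm a n (X \<omega>)) (nrm (X \<omega> - \<xi>)) powr p) \<partial>M) (1 / p)"
    using assms unfolding quant_err_def
    by (simp add: nn_integral_dist_set_first_pts nn_integral_dist_pts_eq)
  then show ?thesis by (rule enn_powr_le_cancel) (use p in simp)
qed

text \<open>Replacing \<open>a (Suc n)\<close> by the competitor \<open>\<xi>\<close> gains at least \<open>gain * D\<^sup>p\<close> on the ball
  \<open>B(\<xi>, b D)\<close>, where \<open>D\<close> is the distance of \<open>\<xi>\<close> to \<open>a\<^sup>(\<^sup>n\<^sup>)\<close>; greediness forbids the gain
  to exceed the actual decrease of the error.\<close>
lemma moment_decrease_ge:
  fixes \<xi> :: 'a
  assumes "1 \<le> n"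
  defines "D \<equiv> dist_pts nrm a n \<xi>"
  shows "ennreal (moment (Suc n)) + ennreal (gain * D powr p) * emeasure mu (nball nrm \<xi> (b * D))
    \<le> ennreal (moment n)"
proof -
  define B where "B = nball nrm \<xi> (b * D)"
  define g where "g x = min (dist_pts nrm a n x) (nrm (x - \<xi>)) powr p" for x
  have pw: "ennreal (g x) + ennreal (gain * D powr p) * indicator B x \<le> ennreal (dist_pts nrm a n x powr p)"
    for x
  proof (cases "x \<in> B")
    case True
    then have "g x + gain * D powr p \<le> dist_pts nrm a n x powr p"
      using powr_min_dist_pts_gain[OF nrm assms(1), of b p x \<xi>] b p
      unfolding g_def gain_def D_def B_def nball_def by simp
    then show ?thesis
      using True gain_pos by (simp add: g_def ennreal_plus[symmetric] del: ennreal_plus)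
  next
    case False
    have "g x \<le> dist_pts nrm a n x powr p" unfolding g_def using p
      by (intro powr_mono2) (auto simp: dist_pts_nonneg[OF nrm assms(1)] is_norm_nonneg[OF nrm])
    then show ?thesis using False by simp
  qed
  have "emeasure mu B = (\<integral>\<^sup>+x. indicator B x \<partial>mu)"
    using nball_in_borel[OF nrm] by (simp add: B_def)
  also have "\<dots> = (\<integral>\<^sup>+\<omega>. indicator B (X \<omega>) \<partial>M)"
    unfolding mu_def by (rule nn_integral_distr) (simp_all add: B_def)
  finally have "ennreal (moment (Suc n)) + ennreal (gain * D powr p) * emeasure mu B
      \<le> (\<integral>\<^sup>+\<omega>. ennreal (g (X \<omega>)) + ennreal (gain * D powr p) * indicator B (X \<omega>) \<partial>M)"
    using greedy_competitor[OF assms(1), of \<xi>] unfolding g_def B_def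
    by (simp add: nn_integral_add nn_integral_cmult add_right_mono)
  also have "\<dots> \<le> ennreal (moment n)"
    unfolding nn_integral_dist_pts_eq[OF assms(1), symmetric] by (intro nn_integral_mono pw)
  finally show ?thesis unfolding B_def .
qed

lemma Psi_ge:
  "1 \<le> n \<Longrightarrow> emeasure lborel (nball nrm \<xi> (b * dist_pts nrm a n \<xi>))
      / emeasure mu (nball nrm \<xi> (b * dist_pts nrm a n \<xi>)) \<le> Psi \<xi>"
  unfolding Psi_def max_fun_dist_pts[OF nrm] by (intro SUP_upper) auto

lemma nball_volume_le_Psi_measure:
  fixes \<xi> :: 'a
  assumes n: "1 \<le> n" and fin: "Psi \<xi> \<noteq> \<infinity>"
  defines "D \<equiv> dist_pts nrm a n \<xi>"
  shows "unit_ball_vol DIM('a) * (b * D / norm_const nrm) ^ DIM('a)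
    \<le> enn2real (Psi \<xi>) * measure mu (nball nrm \<xi> (b * D))"
proof -
  define B where "B = nball nrm \<xi> (b * D)"
  define vol where "vol = unit_ball_vol DIM('a) * (b * D / norm_const nrm) ^ DIM('a)"
  define \<psi> where "\<psi> = enn2real (Psi \<xi>)"
  define m where "m = measure mu B"
  have D0: "0 \<le> D" unfolding D_def by (rule dist_pts_nonneg[OF nrm n])
  have psi0: "0 \<le> \<psi>" unfolding \<psi>_def by simp
  have em: "emeasure mu B = ennreal m" unfolding m_def by (rule emeasure_mu_eq_measure)
  have vol_le: "ennreal vol \<le> emeasure lborel B"
    unfolding vol_def B_def using b D0 by (intro emeasure_nball_ge[OF nrm]) simp
  have ratio: "emeasure lborel B / ennreal m \<le> ennreal \<psi>"
    using Psi_ge[OF n, of \<xi>] fin unfolding B_def D_def \<psi>_def em[unfolded B_def D_def]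
    by (cases "Psi \<xi>") auto
  show ?thesis
  proof (cases "vol = 0")
    case False
    then have vol_pos: "0 < vol" unfolding vol_def using b D0 norm_const_pos[OF nrm] by simp
    have "m \<noteq> 0"
    proof
      assume "m = 0"
      then have "emeasure lborel B / ennreal m = \<top>"
        using vol_le vol_pos by (auto simp: ennreal_divide_eq_top_iff top_unique)
      then show False using ratio by (simp add: top_unique)
    qed
    then have mp: "0 < m" unfolding m_def by (simp add: zero_less_measure_iff)
    have "ennreal (vol / m) \<le> emeasure lborel B / ennreal m"
      using vol_pos mp by (simp add: divide_ennreal[symmetric] divide_right_mono_ennreal vol_le)
    then have "vol / m \<le> \<psi>" using ratio psi0 by (metis ennreal_le_iff order_trans)
    then show ?thesis using mp unfolding vol_def \<psi>_def m_def B_def by (simp add: pos_divide_le_eq)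
  next
    case True
    then show ?thesis using psi0 unfolding vol_def[symmetric] \<psi>_def[symmetric] m_def by simp
  qed
qed

lemma moment_decrease_ge_Psi:
  assumes n: "1 \<le> n" and fin: "Psi \<xi> \<noteq> \<infinity>"
  shows "kappa * dist_pts nrm a n \<xi> powr (p + DIM('a))
    \<le> enn2real (Psi \<xi>) * (moment n - moment (Suc n))"
proof -
  define D where "D = dist_pts nrm a n \<xi>"
  define m where "m = measure mu (nball nrm \<xi> (b * D))"
  define \<psi> where "\<psi> = enn2real (Psi \<xi>)"
  have D0: "0 \<le> D" unfolding D_def by (rule dist_pts_nonneg[OF nrm n])
  have "ennreal (moment (Suc n)) + ennreal (gain * D powr p) * ennreal m \<le> ennreal (moment n)"
    using moment_decrease_ge[OF n, of \<xi>] unfolding D_def[symmetric] m_def emeasure_mu_eq_measure .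
  then have gain_le: "gain * D powr p * m \<le> moment n - moment (Suc n)"
    using gain_pos moment_nonneg m_def
    by (simp add: ennreal_mult[symmetric] ennreal_plus[symmetric] del: ennreal_plus)
  have "kappa * D powr (p + DIM('a))
      = (gain * D powr p) * (unit_ball_vol DIM('a) * (b * D / norm_const nrm) ^ DIM('a))"
    unfolding kappa_def using D0
    by (cases "D = 0") (simp_all add: powr_add powr_realpow power_mult_distrib power_divide)
  also have "\<dots> \<le> (gain * D powr p) * (\<psi> * m)"
    using nball_volume_le_Psi_measure[OF n fin] gain_pos
    unfolding D_def[symmetric] \<psi>_def[symmetric] m_def[symmetric] by (intro mult_left_mono) auto
  also have "\<dots> \<le> \<psi> * (moment n - moment (Suc n))"
    using gain_le unfolding \<psi>_def by (metis enn2real_nonneg mult.commute mult.left_commute mult_left_mono)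
  finally show ?thesis unfolding D_def \<psi>_def .
qed

lemma dist_pts_double_telescope:
  assumes n: "1 \<le> n" and fin: "Psi \<xi> \<noteq> \<infinity>"
  shows "kappa * n * dist_pts nrm a (2 * n) \<xi> powr (p + DIM('a)) \<le> enn2real (Psi \<xi>) * moment n"
proof -
  define \<psi> where "\<psi> = enn2real (Psi \<xi>)"
  define e where "e = p + DIM('a)"
  have "kappa * j * dist_pts nrm a (n + j) \<xi> powr e \<le> \<psi> * (moment n - moment (n + j))" for j
  proof (induction j)
    case (Suc j)
    have nj: "1 \<le> n + j" using n by simp
    have "dist_pts nrm a (Suc (n + j)) \<xi> powr e \<le> dist_pts nrm a (n + j) \<xi> powr e"
      using p dist_pts_antimono[OF nj, of "Suc (n + j)"]
      by (intro powr_mono2) (auto simp: e_def dist_pts_nonneg[OF nrm] nj)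
    then have "kappa * Suc j * dist_pts nrm a (n + Suc j) \<xi> powr e
        \<le> kappa * Suc j * dist_pts nrm a (n + j) \<xi> powr e"
      using kappa_pos by (intro mult_left_mono) auto
    also have "\<dots> = kappa * j * dist_pts nrm a (n + j) \<xi> powr e + kappa * dist_pts nrm a (n + j) \<xi> powr e"
      by (simp add: algebra_simps)
    also have "\<dots> \<le> \<psi> * (moment n - moment (n + j)) + \<psi> * (moment (n + j) - moment (Suc (n + j)))"
      using Suc.IH moment_decrease_ge_Psi[OF nj fin] unfolding \<psi>_def e_def by (intro add_mono)
    finally show ?case by (simp add: algebra_simps)
  qed simp
  from this[of n] have "kappa * n * dist_pts nrm a (2 * n) \<xi> powr e \<le> \<psi> * (moment n - moment (2 * n))"
    by (simp add: mult_2)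
  also have "\<dots> \<le> \<psi> * moment n" unfolding \<psi>_def using moment_nonneg by (intro mult_left_mono) auto
  finally show ?thesis unfolding \<psi>_def e_def .
qed

lemma dist_pts_double_powr_le:
  assumes m: "1 \<le> m" and "0 < moment m" "0 < r"
  shows "ennreal (dist_pts nrm a (2 * m) \<xi> powr r)
    \<le> ennreal ((moment m / (kappa * m)) powr (r / (p + DIM('a)))) * enn_powr (Psi \<xi>) (r / (p + DIM('a)))"
proof (cases "Psi \<xi> = \<infinity>")
  case True
  have "0 < (moment m / (kappa * m)) powr (r / (p + DIM('a)))"
    using assms kappa_pos by simp
  then show ?thesis using True unfolding enn_powr_def by simp
next
  case False
  define e where "e = p + DIM('a)"
  define \<psi> where "\<psi> = enn2real (Psi \<xi>)"
  define c where "c = moment m / (kappa * m)"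
  define D where "D = dist_pts nrm a (2 * m) \<xi>"
  have e: "0 < e" unfolding e_def using p by simp
  have psi0: "0 \<le> \<psi>" unfolding \<psi>_def by simp
  have D0: "0 \<le> D" unfolding D_def using m by (intro dist_pts_nonneg[OF nrm]) simp
  have Psi_eq: "Psi \<xi> = ennreal \<psi>" unfolding \<psi>_def using False by (cases "Psi \<xi>") auto
  have "kappa * m * D powr e \<le> \<psi> * moment m"
    unfolding D_def \<psi>_def e_def by (rule dist_pts_double_telescope[OF m False])
  then have "D powr e \<le> \<psi> * c" unfolding c_def using kappa_pos m by (simp add: field_simps)
  then have "(D powr e) powr (r / e) \<le> (\<psi> * c) powr (r / e)"
    using assms e by (intro powr_mono2) auto
  then have "D powr r \<le> c powr (r / e) * \<psi> powr (r / e)"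
    using e by (simp add: powr_powr powr_mult mult.commute)
  then show ?thesis
    unfolding D_def[symmetric] c_def[symmetric] e_def[symmetric] Psi_eq using psi0
    by (simp add: enn_powr_ennreal ennreal_mult[symmetric] ennreal_leI)
qed

lemma borel_measurable_Psi [measurable]: "Psi \<in> borel_measurable borel"
  unfolding Psi_def using prob_space_mu
  by (intro borel_measurable_max_fun[OF nrm]) (simp_all add: prob_space.axioms(1))

lemma nn_integral_Psi_X:
  "(\<integral>\<^sup>+\<omega>. enn_powr (Psi (X \<omega>)) r \<partial>M) = (\<integral>\<^sup>+\<xi>. enn_powr (Psi \<xi>) r \<partial>mu)"
  unfolding mu_def by (subst nn_integral_distr) simp_all

lemma nn_integral_dist_pts_double_le:
  assumes m: "1 \<le> m" and r: "0 < r"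
  shows "(\<integral>\<^sup>+\<omega>. ennreal (dist_pts nrm a (2 * m) (X \<omega>) powr r) \<partial>M)
    \<le> ennreal ((moment m / (kappa * m)) powr (r / (p + DIM('a))))
        * (\<integral>\<^sup>+\<xi>. enn_powr (Psi \<xi>) (r / (p + DIM('a))) \<partial>mu)"
proof (cases "moment m = 0")
  case True
  then have "AE \<omega> in M. ennreal (dist_pts nrm a m (X \<omega>) powr p) = 0"
    using nn_integral_dist_pts_eq[OF m] by (simp add: nn_integral_0_iff_AE)
  then have "AE \<omega> in M. ennreal (dist_pts nrm a (2 * m) (X \<omega>) powr r) = 0"
  proof (rule eventually_mono)
    fix \<omega> assume "ennreal (dist_pts nrm a m (X \<omega>) powr p) = 0"
    then have "dist_pts nrm a m (X \<omega>) = 0"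
      using dist_pts_nonneg[OF nrm m] by (simp add: ennreal_eq_0_iff)
    moreover have "dist_pts nrm a (2 * m) (X \<omega>) \<le> dist_pts nrm a m (X \<omega>)"
      using m by (intro dist_pts_antimono) auto
    moreover have "0 \<le> dist_pts nrm a (2 * m) (X \<omega>)" using m by (intro dist_pts_nonneg[OF nrm]) auto
    ultimately show "ennreal (dist_pts nrm a (2 * m) (X \<omega>) powr r) = 0" by simp
  qed
  then have "(\<integral>\<^sup>+\<omega>. ennreal (dist_pts nrm a (2 * m) (X \<omega>) powr r) \<partial>M) = 0"
    by (subst nn_integral_0_iff_AE) simp_all
  then show ?thesis by simp
next
  case False
  then have "0 < moment m" using moment_nonneg[of m] by simp
  then have "(\<integral>\<^sup>+\<omega>. ennreal (dist_pts nrm a (2 * m) (X \<omega>) powr r) \<partial>M)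
      \<le> (\<integral>\<^sup>+\<omega>. ennreal ((moment m / (kappa * m)) powr (r / (p + DIM('a))))
            * enn_powr (Psi (X \<omega>)) (r / (p + DIM('a))) \<partial>M)"
    by (intro nn_integral_mono dist_pts_double_powr_le[OF m _ r])
  also have "\<dots> = ennreal ((moment m / (kappa * m)) powr (r / (p + DIM('a))))
        * (\<integral>\<^sup>+\<xi>. enn_powr (Psi \<xi>) (r / (p + DIM('a))) \<partial>mu)"
    by (simp add: nn_integral_cmult nn_integral_Psi_X)
  finally show ?thesis .
qed

end

locale greedy_quantization_maximal = greedy_quantization M nrm X p b a
  for M :: "'b measure" and nrm :: "'a::euclidean_space \<Rightarrow> real" and X p b a +
  fixes q :: real
  assumes pq: "p < q"
    and Psi_moment: "(\<integral>\<^sup>+\<xi>. enn_powr (Psi \<xi>) (q / (p + DIM('a))) \<partial>mu) < \<infinity>"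
begin

lemma Psi_moment_p: "(\<integral>\<^sup>+\<xi>. enn_powr (Psi \<xi>) (p / (p + DIM('a))) \<partial>mu) < \<infinity>"
proof -
  have "(\<integral>\<^sup>+\<xi>. enn_powr (Psi \<xi>) (p / (p + DIM('a))) \<partial>mu)
      \<le> (\<integral>\<^sup>+\<xi>. 1 + enn_powr (Psi \<xi>) (q / (p + DIM('a))) \<partial>mu)"
    using p pq by (intro nn_integral_mono enn_powr_le_one_plus) (auto simp: divide_right_mono)
  also have "\<dots> = 1 + (\<integral>\<^sup>+\<xi>. enn_powr (Psi \<xi>) (q / (p + DIM('a))) \<partial>mu)"
    using prob_space.emeasure_space_1[OF prob_space_mu] by (subst nn_integral_add) auto
  also have "\<dots> < \<infinity>" using Psi_moment by simp
  finally show ?thesis .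
qed

lemma moment_halving:
  assumes m: "1 \<le> m"
  defines "\<alpha> \<equiv> p / (p + DIM('a))"
  shows "moment (2 * m)
    \<le> kappa powr (- \<alpha>) * enn2real (\<integral>\<^sup>+\<xi>. enn_powr (Psi \<xi>) \<alpha> \<partial>mu) * (moment m / m) powr \<alpha>"
proof -
  define J where "J = enn2real (\<integral>\<^sup>+\<xi>. enn_powr (Psi \<xi>) \<alpha> \<partial>mu)"
  have J: "(\<integral>\<^sup>+\<xi>. enn_powr (Psi \<xi>) \<alpha> \<partial>mu) = ennreal J"
    using Psi_moment_p unfolding J_def \<alpha>_def by (simp add: less_top)
  have "ennreal (moment (2 * m)) \<le> ennreal ((moment m / (kappa * m)) powr \<alpha>) * ennreal J"
    using nn_integral_dist_pts_double_le[OF m p] nn_integral_dist_pts_eq[of "2 * m"] m J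
    unfolding \<alpha>_def by simp
  then have "moment (2 * m) \<le> (moment m / (kappa * m)) powr \<alpha> * J"
    by (simp add: ennreal_mult[symmetric] J_def)
  also have "(moment m / (kappa * m)) powr \<alpha> = kappa powr (- \<alpha>) * (moment m / m) powr \<alpha>"
  proof -
    have "(moment m / (kappa * m)) powr \<alpha> = (moment m / m) powr \<alpha> / kappa powr \<alpha>"
      using kappa_pos moment_nonneg[of m] by (subst powr_divide[symmetric]) (simp_all add: ac_simps)
    then show ?thesis by (simp add: powr_minus divide_inverse)
  qed
  finally show ?thesis by (simp add: J_def mult_ac)
qed

lemma moment_decay: "\<exists>C>0. \<forall>n\<ge>1. moment n \<le> C * real n powr (- (p / DIM('a)))"
proof -
  define \<alpha> where "\<alpha> = p / (p + DIM('a))"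
  have \<alpha>: "0 < \<alpha>" "\<alpha> < 1" unfolding \<alpha>_def using p by auto
  have "1 - \<alpha> = DIM('a) / (p + DIM('a))" unfolding \<alpha>_def using p by (simp add: field_simps)
  then have "\<alpha> / (1 - \<alpha>) = p / DIM('a)" unfolding \<alpha>_def using p by simp
  moreover have "\<exists>C>0. \<forall>n\<ge>1. moment n \<le> C * real n powr (- (\<alpha> / (1 - \<alpha>)))"
    by (rule halving_recursion_decay[OF \<alpha> _ moment_nonneg moment_antimono moment_halving[folded \<alpha>_def]])
      simp
  ultimately show ?thesis by simp
qed

lemma moment_ratio_decay:
  assumes r: "0 < r"
  shows "\<exists>K\<ge>0. \<forall>n\<ge>2. (moment (n div 2) / (kappa * real (n div 2))) powr (r / (p + DIM('a)))
    \<le> K * real n powr (- (r / DIM('a)))"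
proof -
  define e where "e = p + real DIM('a)"
  have e: "0 < e" using p by (simp add: e_def)
  obtain C where C: "0 < C" "\<And>n. 1 \<le> n \<Longrightarrow> moment n \<le> C * real n powr (- (p / DIM('a)))"
    using moment_decay by blast
  have "(moment m / (kappa * m)) powr (r / e) \<le> (C / kappa) powr (r / e) * (3 powr (r / DIM('a)) * real n powr (- (r / DIM('a))))"
    if n: "2 \<le> n" and m: "m = n div 2" for n m
  proof -
    have m1: "1 \<le> m" using n m by simp
    have "(moment m / (kappa * m)) powr (r / e) \<le> (C * real m powr (- (p / DIM('a))) / (kappa * m)) powr (r / e)"
      using C(2)[OF m1] kappa_pos m1 r e moment_nonneg[of m] by (intro powr_mono2 divide_right_mono) auto
    also have "C * real m powr (- (p / DIM('a))) / (kappa * m) = (C / kappa) * real m powr (- e / DIM('a))"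
      using m1 by (simp add: e_def powr_diff add_divide_distrib diff_divide_distrib)
    also have "((C / kappa) * real m powr (- e / DIM('a))) powr (r / e)
        = (C / kappa) powr (r / e) * real m powr (- (r / DIM('a)))"
      using r e C(1) kappa_pos by (subst powr_mult) (simp_all add: powr_powr)
    also have "\<dots> \<le> (C / kappa) powr (r / e) * (3 powr (r / DIM('a)) * real n powr (- (r / DIM('a))))"
      using powr_half_le[OF n, of "r / DIM('a)"] r unfolding m by (intro mult_left_mono) auto
    finally show ?thesis .
  qed
  then show ?thesis unfolding e_def
    by (intro exI[of _ "(C / kappa) powr (r / e) * 3 powr (r / DIM('a))"]) (simp add: e_def mult_ac)
qed

lemma nn_integral_dist_pts_q_decay:
  "\<exists>K\<ge>0. \<forall>n\<ge>2. (\<integral>\<^sup>+\<omega>. ennreal (dist_pts nrm a n (X \<omega>) powr q) \<partial>M)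
      \<le> ennreal (K * real n powr (- (q / DIM('a))))"
proof -
  define I where "I = enn2real (\<integral>\<^sup>+\<xi>. enn_powr (Psi \<xi>) (q / (p + DIM('a))) \<partial>mu)"
  have q: "0 < q" using p pq by simp
  obtain K where K: "0 \<le> K" "\<And>n. 2 \<le> n \<Longrightarrow> (moment (n div 2) / (kappa * real (n div 2))) powr (q / (p + DIM('a)))
    \<le> K * real n powr (- (q / DIM('a)))"
    using moment_ratio_decay[OF q] by blast
  have I: "(\<integral>\<^sup>+\<xi>. enn_powr (Psi \<xi>) (q / (p + DIM('a))) \<partial>mu) = ennreal I"
    using Psi_moment unfolding I_def by (simp add: less_top)
  have "(\<integral>\<^sup>+\<omega>. ennreal (dist_pts nrm a n (X \<omega>) powr q) \<partial>M) \<le> ennreal (K * I * real n powr (- (q / DIM('a))))"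
    if n: "2 \<le> n" for n
  proof -
    define m where "m = n div 2"
    have m: "1 \<le> m" "2 * m \<le> n" unfolding m_def using n by auto
    have "(\<integral>\<^sup>+\<omega>. ennreal (dist_pts nrm a n (X \<omega>) powr q) \<partial>M)
        \<le> (\<integral>\<^sup>+\<omega>. ennreal (dist_pts nrm a (2 * m) (X \<omega>) powr q) \<partial>M)"
      using m q by (intro nn_integral_mono ennreal_leI powr_mono2)
        (auto simp: dist_pts_nonneg[OF nrm] dist_pts_antimono)
    also have "\<dots> \<le> ennreal ((moment m / (kappa * m)) powr (q / (p + DIM('a)))) * ennreal I"
      using nn_integral_dist_pts_double_le[OF m(1) q] I by simp
    also have "\<dots> \<le> ennreal (K * real n powr (- (q / DIM('a)))) * ennreal I"
      using K(2)[OF n] unfolding m_def by (intro mult_right_mono ennreal_leI) auto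
    also have "\<dots> = ennreal (K * I * real n powr (- (q / DIM('a))))"
      using K(1) by (simp add: ennreal_mult[symmetric] I_def mult_ac)
    finally show ?thesis .
  qed
  moreover have "0 \<le> K * I" using K(1) unfolding I_def by simp
  ultimately show ?thesis by blast
qed

lemma moment_q_finite: "(\<integral>\<^sup>+\<omega>. ennreal (nrm (X \<omega>) powr q) \<partial>M) < \<infinity>"
proof -
  obtain K where "(\<integral>\<^sup>+\<omega>. ennreal (dist_pts nrm a 2 (X \<omega>) powr q) \<partial>M) \<le> ennreal (K * 2 powr (- (q / DIM('a))))"
    using nn_integral_dist_pts_q_decay by fastforce
  then have fin: "(\<integral>\<^sup>+\<omega>. ennreal (dist_pts nrm a 2 (X \<omega>) powr q) \<partial>M) < \<infinity>"
    by (simp add: le_less_trans)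
  have "nrm x \<le> dist_pts nrm a 2 x + (nrm (a 1) + nrm (a 2))" for x
  proof -
    obtain i where i: "i \<in> {1..2}" "dist_pts nrm a 2 x = nrm (x - a i)"
      using dist_pts_attained[of 2 nrm a x] by auto
    moreover have "i = 1 \<or> i = 2" using i(1) by auto
    ultimately have "nrm (a i) \<le> nrm (a 1) + nrm (a 2)"
      using is_norm_nonneg[OF nrm, of "a 1"] is_norm_nonneg[OF nrm, of "a 2"] by auto
    then show ?thesis using is_norm_triangle[OF nrm, of "x - a i" "a i"] i(2) by simp
  qed
  then show ?thesis
    using p pq by (intro nn_integral_powr_finite_shift[OF _ _ _ _ _ _ fin])
      (use is_norm_nonneg[OF nrm] dist_pts_nonneg[OF nrm] in auto)
qed

lemma quant_err_decay:
  "\<exists>B. \<forall>n\<ge>2. ennreal (real n powr (1 / DIM('a))) * quant_err nrm M X q (first_pts a n) \<le> ennreal B"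
proof -
  obtain K where K: "0 \<le> K" "\<And>n. 2 \<le> n \<Longrightarrow> (\<integral>\<^sup>+\<omega>. ennreal (dist_pts nrm a n (X \<omega>) powr q) \<partial>M)
      \<le> ennreal (K * real n powr (- (q / DIM('a))))"
    using nn_integral_dist_pts_q_decay by blast
  have q: "0 < q" using p pq by simp
  have "ennreal (real n powr (1 / DIM('a))) * quant_err nrm M X q (first_pts a n) \<le> ennreal (K powr (1 / q))"
    if n: "2 \<le> n" for n
  proof -
    define V where "V = (\<integral>\<^sup>+\<omega>. ennreal (dist_pts nrm a n (X \<omega>) powr q) \<partial>M)"
    have V_le: "V \<le> ennreal (K * real n powr (- (q / DIM('a))))" unfolding V_def by (rule K(2)[OF n])
    then obtain v where v: "V = ennreal v" "0 \<le> v"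
      by (metis ennreal_cases ennreal_less_top infinity_ennreal_def le_less_trans less_irrefl)
    have "1 \<le> n" using n by simp
    then have "quant_err nrm M X q (first_pts a n) = enn_powr V (1 / q)"
      unfolding quant_err_def V_def by (simp add: nn_integral_dist_set_first_pts)
    then have qe: "quant_err nrm M X q (first_pts a n) = ennreal (v powr (1 / q))"
      using v by (simp add: enn_powr_ennreal)
    have "v powr (1 / q) \<le> K powr (1 / q) * real n powr (- (1 / DIM('a)))"
    proof -
      have "v powr (1 / q) \<le> (K * real n powr (- (q / DIM('a)))) powr (1 / q)"
        using V_le v q K(1) by (intro powr_mono2) auto
      also have "\<dots> = K powr (1 / q) * real n powr (- (1 / DIM('a)))"
        using q K(1) by (simp add: powr_mult powr_powr)
      finally show ?thesis .
    qed
    then have "real n powr (1 / DIM('a)) * v powr (1 / q)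
        \<le> real n powr (1 / DIM('a)) * (K powr (1 / q) * real n powr (- (1 / DIM('a))))"
      by (rule mult_left_mono) simp
    also have "\<dots> = K powr (1 / q)"
      using n by (simp add: mult.left_commute powr_add[symmetric])
    finally show ?thesis unfolding qe by (simp add: ennreal_mult[symmetric] ennreal_leI)
  qed
  then show ?thesis by blast
qed

end

theorem proposition3p2:
  fixes nrm :: "'a::euclidean_space \<Rightarrow> real"
    and M :: "'b measure" and X :: "'b \<Rightarrow> 'a"
    and p q b :: real and a :: "nat \<Rightarrow> 'a"
  assumes "is_norm nrm"
    and "prob_space M" and "X \<in> borel_measurable M"
    and "0 < p" and "p < q"
    and "(\<integral>\<^sup>+ \<omega>. ennreal (nrm (X \<omega>) powr p) \<partial>M) < \<infinity>"
    and "greedy_seq nrm M X p a"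
    and "0 < b" and "b < 1/2"
    and "(\<integral>\<^sup>+ \<xi>. enn_powr (max_fun nrm (distr M borel X) a b \<xi>) (q / (p + real DIM('a)))
            \<partial>(distr M borel X)) < \<infinity>"
  shows "(\<integral>\<^sup>+ \<omega>. ennreal (nrm (X \<omega>) powr q) \<partial>M) < \<infinity>
    \<and> limsup (\<lambda>n. ennreal (real n powr (1 / real DIM('a))) * quant_err nrm M X q (first_pts a n)) < \<infinity>"
proof -
  interpret greedy_quantization M nrm X p b a
    using assms by (intro greedy_quantization.intro greedy_quantization_axioms.intro) simp_all
  interpret greedy_quantization_maximal M nrm X p b a q
    using assms
    by (intro greedy_quantization_maximal.intro greedy_quantization_maximal_axioms.intro
        greedy_quantization_axioms) (simp_all add: Psi_def mu_def)
  obtain B where "\<forall>n\<ge>2. ennreal (real n powr (1 / DIM('a))) * quant_err nrm M X q (first_pts a n) \<le> ennreal B"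
    using quant_err_decay by blast
  then have "limsup (\<lambda>n. ennreal (real n powr (1 / DIM('a))) * quant_err nrm M X q (first_pts a n)) \<le> ennreal B"
    by (intro Limsup_bounded eventually_sequentiallyI[of 2]) auto
  then show ?thesis using moment_q_finite by (simp add: le_less_trans)
qed

end
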